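(* Let $m$ be a bounded generating sequence. There is a constant $c$ depending only on $m$ such that the following holds. Let $N\ge1$, $0\le k\le N-1$, $k+1\le l\le N$, and $x\in I_N^{k,l}$. Then for every integer $n\ge M_N$, $$\int_{I_N}|K_n(x-t)|\,d\mu(t)\le \frac{c\,M_lM_k}{M_N^2}.$$
   Context: Let $m=(m_0,m_1,\dots)$ be a sequence of integers $m_k\ge 2$ with $\sup_k m_k<\infty$. $G_m=\prod_k Z_{m_k}$ (where $Z_{m_k}=\{0,\dots,m_k-1\}$ is the group of integers mod $m_k$) with coordinatewise addition mod $m_k$, elements $x=(x_0,x_1,\dots)$, and normalized Haar measure $\mu$ (product of uniform measures). $M_0=1$, $M_{k+1}=m_kM_k$; every $n\in\mathbb{N}$ is uniquely $n=\sum_jn_jM_j$, $n_j\in Z_{m_j}$. $I_N=\{y\in G_m: y_0=\dots=y_{N-1}=0\}$. $r_k(x)=\exp(2\pi ix_k/m_k)$, $\psi_n=\prod_kr_k^{n_k}$, $D_n=\sum_{k=0}^{n-1}\psi_k$, and the Fejér kernel is $K_n=\frac1n\sum_{k=0}^{n-1}D_k$ ($n\ge1$). For $0\le k<l<N$, $I_N^{k,l}$ denotes the set of $x\in G_m$ with $x_0=\dots=x_{k-1}=0$, $x_k\ne0$, $x_{k+1}=\dots=x_{l-1}=0$, $x_l\ne0$, and $x_j$ arbitrary for $j>l$. For $0\le k<N$, $I_N^{k,N}$ denotes the set of $x\in G_m$ with $x_0=\dots=x_{k-1}=0$, $x_k\ne0$, $x_{k+1}=\dots=x_{N-1}=0$,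 and $x_j$ arbitrary for $j\ge N$. *)

theory Defs
  imports "HOL-Probability.Probability"
begin

text \<open>A sequence m is encoded as m :: nat => nat; elements of G_m as functions nat => nat
  with x k < m k for all k.\<close>

definition bounded_gen_seq :: "(nat \<Rightarrow> nat) \<Rightarrow> bool" where
  "bounded_gen_seq m \<longleftrightarrow> (\<forall>k. m k \<ge> 2) \<and> bdd_above (range m)"

definition Gm :: "(nat \<Rightarrow> nat) \<Rightarrow> (nat \<Rightarrow> nat) set" where
  "Gm m = PiE UNIV (\<lambda>k. {..<m k})"

definition haar :: "(nat \<Rightarrow> nat) \<Rightarrow> (nat \<Rightarrow> nat) measure" where
  "haar m = PiM UNIV (\<lambda>k. uniform_count_measure {..<m k})"

definition Mseq :: "(nat \<Rightarrow> nat) \<Rightarrow> nat \<Rightarrow> nat" where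
  "Mseq m k = (\<Prod>j<k. m j)"

definition digit :: "(nat \<Rightarrow> nat) \<Rightarrow> nat \<Rightarrow> nat \<Rightarrow> nat" where
  "digit m n j = (n div Mseq m j) mod m j"

definition gsub :: "(nat \<Rightarrow> nat) \<Rightarrow> (nat \<Rightarrow> nat) \<Rightarrow> (nat \<Rightarrow> nat) \<Rightarrow> (nat \<Rightarrow> nat)" where
  "gsub m x t = (\<lambda>k. (x k + m k - t k) mod m k)"

definition rchar :: "(nat \<Rightarrow> nat) \<Rightarrow> nat \<Rightarrow> (nat \<Rightarrow> nat) \<Rightarrow> complex" where
  "rchar m k x = cis (2 * pi * real (x k) / real (m k))"

text \<open>psi_n = prod_k r_k^{n_k}; all factors with k >= n+1 are 1 since n_k = 0 there.\<close>
definition psi :: "(nat \<Rightarrow> nat) \<Rightarrow> nat \<Rightarrow> (nat \<Rightarrow> nat) \<Rightarrow> complex" where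
  "psi m n x = (\<Prod>k<Suc n. rchar m k x ^ digit m n k)"

definition dirichlet :: "(nat \<Rightarrow> nat) \<Rightarrow> nat \<Rightarrow> (nat \<Rightarrow> nat) \<Rightarrow> complex" where
  "dirichlet m n x = (\<Sum>k<n. psi m k x)"

definition fejer :: "(nat \<Rightarrow> nat) \<Rightarrow> nat \<Rightarrow> (nat \<Rightarrow> nat) \<Rightarrow> complex" where
  "fejer m n x = (\<Sum>k<n. dirichlet m k x) / of_nat n"

definition IN :: "(nat \<Rightarrow> nat) \<Rightarrow> nat \<Rightarrow> (nat \<Rightarrow> nat) set" where
  "IN m N = {y \<in> Gm m. \<forall>j<N. y j = 0}"

text \<open>I_N^{k,l}; for l = N the condition on x_l is dropped (arbitrary for j >= N).\<close>
definition INkl :: "(nat \<Rightarrow> nat) \<Rightarrow> nat \<Rightarrow> nat \<Rightarrow> nat \<Rightarrow> (nat \<Rightarrow> nat) set" where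
  "INkl m N k l = {x \<in> Gm m. (\<forall>j<k. x j = 0) \<and> x k \<noteq> 0 \<and> (\<forall>j. k < j \<and> j < l \<longrightarrow> x j = 0)
      \<and> (l < N \<longrightarrow> x l \<noteq> 0)}"

end

theory Submission
  imports Defs
begin

(* For x in I_N^{k,l} and t in I_N put u = x - t.  Then u_j = x_j for j < N, so u_k \<noteq> 0
   and, when l < N, also u_l \<noteq> 0.  It therefore suffices to bound |K_n(u)| pointwise by
   c M_l M_k / M_N, because the Haar measure of I_N is 1/M_N.

   The pointwise bound rests on the multiplicativity psi_{a M_p + b} = psi_{a M_p} psi_b
   (b < M_p) of the characters, which holds because the digits of a M_p and b are disjoint.
   It makes character sums over a full period of a nonzero digit vanish, in particular
   D_{M_p}(u) = 0 when u_s \<noteq> 0 for some s < p, and it splits the sums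
   S_n = \<Sum>_{j<n} D_j = n K_n as S_{aP+R} = (\<Sum>_{i<a} psi_{iP}) S_P + psi_{aP} S_R whenever
   D_P(u) = 0.  Applied with P = M_{k+1} (the outer character sum being controlled through
   u_l) this gives |S_R| \<le> (B^2 + B) M_l M_k for all R \<le> M_N, where B bounds m; applied
   once more with P = M_N it gives |K_n(u)| \<le> 2 (B^2 + B) M_l M_k / M_N for n \<ge> M_N. *)


section \<open>The Haar measure of I_N\<close>

lemma product_prob_space_uniform:
  fixes m :: "nat \<Rightarrow> nat"
  assumes "\<And>k. 0 < m k"
  shows "product_prob_space (\<lambda>k. uniform_count_measure {..<m k})"
proof -
  have "prob_space (uniform_count_measure {..<m k})" for k
    using assms by (intro prob_space_uniform_count_measure) auto
  then show ?thesis
    unfolding product_prob_space_def product_sigma_finite_def product_prob_space_axioms_def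
    by (auto simp: prob_space_imp_sigma_finite)
qed

lemma prob_space_haar:
  fixes m :: "nat \<Rightarrow> nat"
  assumes "\<And>k. 0 < m k"
  shows "prob_space (haar m)"
proof -
  interpret product_prob_space "\<lambda>k. uniform_count_measure {..<m k}" UNIV
    using product_prob_space_uniform assms .
  show ?thesis unfolding haar_def by (rule P.prob_space_axioms)
qed

lemma IN_eq_prod_emb:
  "IN m N = prod_emb UNIV (\<lambda>k. uniform_count_measure {..<m k}) {..<N} (PiE {..<N} (\<lambda>_. {0}))"
  unfolding IN_def Gm_def prod_emb_def
  by (auto simp: space_PiM PiE_iff restrict_def space_uniform_count_measure fun_eq_iff; meson)

lemma measure_IN:
  assumes "\<And>k. 0 < m k"
  shows "IN m N \<in> sets (haar m)" "measure (haar m) (IN m N) = 1 / real (Mseq m N)"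
proof -
  interpret product_prob_space "\<lambda>k. uniform_count_measure {..<m k}" UNIV
    using product_prob_space_uniform assms .
  show "IN m N \<in> sets (haar m)" unfolding haar_def IN_eq_prod_emb
    using assms by (intro sets_PiM_I) (auto simp: sets_uniform_count_measure)
  have "measure (haar m) (IN m N) = (\<Prod>i<N. measure (uniform_count_measure {..<m i}) {0})"
    unfolding haar_def IN_eq_prod_emb
    using assms by (intro measure_PiM_emb) (auto simp: sets_uniform_count_measure)
  also have "\<dots> = (\<Prod>i<N. 1 / real (m i))"
    using assms by (intro prod.cong) (auto simp: measure_uniform_count_measure)
  also have "\<dots> = 1 / real (Mseq m N)" unfolding Mseq_def by (simp add: prod_dividef)
  finally show "measure (haar m) (IN m N) = 1 / real (Mseq m N)" .
qed

text \<open>A real function bounded above on a set of finite measure by a constant C \<ge> 0 has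
  integral at most C times the measure of the set (if the function is not integrable its
  integral is 0, so no measurability is needed).\<close>
lemma set_integral_le_const:
  fixes f :: "'a \<Rightarrow> real"
  assumes A: "A \<in> sets M" "emeasure M A < \<infinity>"
    and bound: "\<And>t. t \<in> A \<Longrightarrow> f t \<le> C" and C: "0 \<le> C"
  shows "(\<integral>t\<in>A. f t \<partial>M) \<le> measure M A * C"
proof -
  have "(\<integral>t\<in>A. f t \<partial>M) \<le> (\<integral>t. indicator A t *\<^sub>R C \<partial>M)"
    unfolding set_lebesgue_integral_def
  proof (rule integral_mono')
    show "integrable M (\<lambda>t. indicator A t *\<^sub>R C)" using A by (rule integrable_indicator)
  qed (use bound C in \<open>auto split: split_indicator\<close>)
  also have "\<dots> = measure M A * C"
    using set_integral_const[of A M C] A unfolding set_lebesgue_integral_def by simp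
  finally show ?thesis .
qed


section \<open>The numbers M_k and digits\<close>

lemma Mseq_Suc: "Mseq m (Suc k) = m k * Mseq m k"
  by (simp add: Mseq_def)

lemma Mseq_pos: "(\<And>k. 0 < m k) \<Longrightarrow> 0 < Mseq m k"
  unfolding Mseq_def by (simp add: prod_pos)

lemma Mseq_split: "p \<le> s \<Longrightarrow> Mseq m s = Mseq m p * (\<Prod>j\<in>{p..<s}. m j)"
proof (induction s rule: dec_induct)
  case (step s)
  then show ?case by (simp add: Mseq_Suc prod.atLeastLessThan_Suc)
qed simp

lemma Mseq_mono: "(\<And>k. 0 < m k) \<Longrightarrow> p \<le> s \<Longrightarrow> Mseq m p \<le> Mseq m s"
  by (metis Mseq_split Mseq_pos dvd_imp_le dvd_triv_left)

text \<open>M_n \<ge> 2^n > n for a generating sequence, so every digit of n at a position \<ge> n vanishes.\<close>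
lemma Mseq_gt_index:
  assumes "\<And>k. 2 \<le> m k" shows "n < Mseq m n"
proof -
  have "2 ^ n \<le> Mseq m n"
    unfolding Mseq_def using prod_mono[of "{..<n}" "\<lambda>_. 2::nat" m] assms by simp
  then show ?thesis using less_exp[of n] by linarith
qed

lemma digit_mult_below:
  assumes "\<And>k. 0 < m k" and "k < p"
  shows "digit m (a * Mseq m p) k = 0" "digit m (a * Mseq m p + b) k = digit m b k"
proof -
  define R where "R = (\<Prod>j\<in>{Suc k..<p}. m j)"
  have Mp: "Mseq m p = Mseq m k * (m k * R)"
    using Mseq_split[of k p m] assms(2) unfolding R_def by (simp add: prod.atLeast_Suc_lessThan)
  have Mk: "0 < Mseq m k" using assms(1) by (rule Mseq_pos)
  have e: "a * Mseq m p + b = b + (a * R * m k) * Mseq m k"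
    unfolding Mp by (simp add: ac_simps)
  have "(a * Mseq m p + b) div Mseq m k = b div Mseq m k + (a * R) * m k"
    unfolding e using Mk by simp
  then show "digit m (a * Mseq m p + b) k = digit m b k" by (simp add: digit_def)
  have "(a * Mseq m p) div Mseq m k = (a * R) * m k"
    unfolding Mp using Mk by (simp add: ac_simps)
  then show "digit m (a * Mseq m p) k = 0" by (simp add: digit_def)
qed

lemma digit_add:
  assumes pos: "\<And>k. 0 < m k" and b: "b < Mseq m p"
  shows "digit m (a * Mseq m p + b) k = digit m (a * Mseq m p) k + digit m b k"
proof (cases "p \<le> k")
  case True
  define Q where "Q = (\<Prod>j\<in>{p..<k}. m j)"
  have Mk: "Mseq m k = Mseq m p * Q" unfolding Q_def using True by (rule Mseq_split)
  have "0 < Mseq m p" using pos by (rule Mseq_pos)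
  then have "(a * Mseq m p + b) div Mseq m k = a div Q" "(a * Mseq m p) div Mseq m k = a div Q"
    unfolding Mk div_mult2_eq using b by simp_all
  moreover have "b div Mseq m k = 0"
    using b Mseq_mono[where m=m, OF pos True] by simp
  ultimately show ?thesis by (simp add: digit_def)
next
  case False
  then show ?thesis using digit_mult_below[OF pos] by simp
qed

lemma digit_single:
  assumes pos: "\<And>k. 0 < m k" and i: "i < m s"
  shows "digit m (i * Mseq m s) k = (if k = s then i else 0)"
proof -
  have Ms: "0 < Mseq m s" using pos by (rule Mseq_pos)
  consider "k < s" | "k = s" | "s < k" by linarith
  then show ?thesis
  proof cases
    case 1 then show ?thesis using digit_mult_below[OF pos] by simp
  next
    case 2 then show ?thesis using Ms i by (simp add: digit_def)
  next
    case 3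
    have "i * Mseq m s < Mseq m (Suc s)" using i Ms by (simp add: Mseq_Suc)
    also have "\<dots> \<le> Mseq m k" using 3 by (intro Mseq_mono[where m=m, OF pos]) simp
    finally show ?thesis using 3 by (simp add: digit_def)
  qed
qed


lemma norm_psi: "norm (psi m n x) = 1"
  unfolding psi_def prod_norm[symmetric] by (simp add: norm_power rchar_def)

lemma norm_sum_psi_le: "norm (\<Sum>a<Q. psi m (f a) u) \<le> real Q"
  using norm_sum[of "\<lambda>a. psi m (f a) u" "{..<Q}"] by (simp add: norm_psi)

lemma sum_root_of_unity_powers:
  fixes a M :: nat assumes "0 < a" "a < M"
  shows "(\<Sum>i<M. cis (2 * pi * real a / real M) ^ i) = 0"
proof -
  let ?r = "cis (2 * pi * real a / real M)"
  have "?r ^ M = cis (real M * (2 * pi * real a / real M))" by (rule Complex.DeMoivre)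
  also have "\<dots> = cis (2 * pi * real a)" using assms by simp
  also have "\<dots> = 1" by (rule cis_multiple_2pi) simp
  finally have r1: "?r ^ M = 1" .
  have "?r \<noteq> 1"
  proof
    assume "?r = 1"
    then have "cos (2 * pi * real a / real M) = 1" by (simp add: complex_eq_iff)
    then obtain n :: int where n: "2 * pi * real a / real M = real_of_int n * 2 * pi"
      using cos_one_2pi_int by blast
    have "real a / real M = (2 * pi * real a / real M) / (2 * pi)" by simp
    also have "\<dots> = real_of_int n" unfolding n by simp
    finally have "real a / real M = real_of_int n" .
    moreover have "0 < real a / real M" "real a / real M < 1" using assms by auto
    ultimately have "0 < n \<and> n < 1" by simp
    then show False by presburger
  qed
  then show ?thesis by (simp add: sum_gp_strict r1)
qed

lemma sum_rchar_powers:
  "0 < u s \<Longrightarrow> u s < m s \<Longrightarrow> (\<Sum>i<m s. rchar m s u ^ i) = 0"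
  unfolding rchar_def by (rule sum_root_of_unity_powers)

lemma sum_split_nat:
  fixes f :: "nat \<Rightarrow> 'a::comm_monoid_add"
  shows "(\<Sum>j<a+b. f j) = (\<Sum>j<a. f j) + (\<Sum>e<b. f (a+e))"
  by (induction b) (simp_all add: add.assoc)

lemma sum_blocks:
  fixes f :: "nat \<Rightarrow> 'a::comm_monoid_add"
  shows "(\<Sum>j<c*P. f j) = (\<Sum>i<c. \<Sum>e<P. f (i*P+e))"
proof (induction c)
  case (Suc c)
  have "(\<Sum>j<Suc c*P. f j) = (\<Sum>j<c*P + P. f j)" by (simp add: add.commute)
  also have "\<dots> = (\<Sum>j<c*P. f j) + (\<Sum>e<P. f (c*P+e))" by (rule sum_split_nat)
  finally show ?case using Suc by simp
qed simp

text \<open>The partial sums S_n = D_0 + ... + D_{n-1} of the Dirichlet kernels, so that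
  K_n = S_n / n.\<close>
definition fejer_sum :: "(nat \<Rightarrow> nat) \<Rightarrow> nat \<Rightarrow> (nat \<Rightarrow> nat) \<Rightarrow> complex" where
  "fejer_sum m n u = (\<Sum>j<n. dirichlet m j u)"

lemma norm_dirichlet_le: "norm (dirichlet m n u) \<le> real n"
  using norm_sum[of "\<lambda>j. psi m j u" "{..<n}"] unfolding dirichlet_def by (simp add: norm_psi)

lemma norm_fejer_sum_le: "norm (fejer_sum m n u) \<le> real n * real n"
proof -
  have "norm (fejer_sum m n u) \<le> (\<Sum>j<n. norm (dirichlet m j u))"
    unfolding fejer_sum_def by (rule norm_sum)
  also have "\<dots> \<le> (\<Sum>j<n. real n)" by (intro sum_mono order.trans[OF norm_dirichlet_le]) simp
  finally show ?thesis by simp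
qed


section \<open>The characters psi_n\<close>

context
  fixes m :: "nat \<Rightarrow> nat"
  assumes m_ge2: "\<And>k. 2 \<le> m k"
begin

lemma m_pos: "0 < m k"
  using m_ge2[of k] by simp

text \<open>Only the digits below K contribute once n < M_K, so psi_n may be computed as a
  product over any such range.\<close>
lemma psi_eq_prod:
  assumes n: "n < Mseq m K"
  shows "psi m n x = (\<Prod>k<K. rchar m k x ^ digit m n k)"
proof -
  have prod_stable: "(\<Prod>k<K2. rchar m k x ^ digit m n k) = (\<Prod>k<K1. rchar m k x ^ digit m n k)"
    if "n < Mseq m K1" "K1 \<le> K2" for K1 K2
  proof (rule prod.mono_neutral_right)
    show "\<forall>k\<in>{..<K2} - {..<K1}. rchar m k x ^ digit m n k = 1"
    proof
      fix k assume "k \<in> {..<K2} - {..<K1}"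
      then have "n < Mseq m k"
        using that Mseq_mono[where m=m, OF m_pos, of K1 k] by auto
      then show "rchar m k x ^ digit m n k = 1" by (simp add: digit_def)
    qed
  qed (use that in auto)
  have "n < Mseq m (Suc n)"
    using Mseq_gt_index[where m=m, OF m_ge2, of n] Mseq_mono[where m=m, OF m_pos, of n "Suc n"] by simp
  then have "psi m n x = (\<Prod>k<max K (Suc n). rchar m k x ^ digit m n k)"
    unfolding psi_def by (rule prod_stable[symmetric]) simp
  also have "\<dots> = (\<Prod>k<K. rchar m k x ^ digit m n k)"
    using n by (rule prod_stable) simp
  finally show ?thesis .
qed

lemma psi_add:
  assumes b: "b < Mseq m p"
  shows "psi m (a * Mseq m p + b) x = psi m (a * Mseq m p) x * psi m b x"
proof -
  let ?K = "a * Mseq m p + b"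
  have big: "?K < Mseq m ?K" by (rule Mseq_gt_index[where m=m, OF m_ge2])
  have "psi m ?K x = (\<Prod>k<?K. rchar m k x ^ digit m (a * Mseq m p) k * rchar m k x ^ digit m b k)"
    unfolding psi_eq_prod[OF big] by (simp only: digit_add[OF m_pos b] power_add)
  also have "\<dots> = psi m (a * Mseq m p) x * psi m b x"
    unfolding prod.distrib using big
    by (simp add: psi_eq_prod[of "a * Mseq m p" ?K] psi_eq_prod[of b ?K])
  finally show ?thesis .
qed

lemma psi_single:
  assumes i: "i < m s"
  shows "psi m (i * Mseq m s) x = rchar m s x ^ i"
proof -
  have "i * Mseq m s < Mseq m (Suc s)"
    using i Mseq_pos[where m=m, OF m_pos, of s] by (simp add: Mseq_Suc)
  then show ?thesis
    by (simp add: psi_eq_prod digit_single[where m=m, OF m_pos i])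
qed


section \<open>Vanishing character sums\<close>

context
  fixes u :: "nat \<Rightarrow> nat" and s :: nat
  assumes us: "0 < u s" "u s < m s"
begin

text \<open>Summing psi_{a M_p}(u) over a full period a < M_{s+1}/M_p (p \<le> s) gives 0: the
  sum factors through the sum of the powers of r_s(u), which is a nontrivial root of unity.\<close>
lemma period_sum_vanishes:
  assumes ps: "p \<le> s"
  shows "(\<Sum>a<(\<Prod>j\<in>{p..<Suc s}. m j). psi m (a * Mseq m p) u) = 0"
proof -
  define Q where "Q = (\<Prod>j\<in>{p..<s}. m j)"
  have L: "(\<Prod>j\<in>{p..<Suc s}. m j) = m s * Q" unfolding Q_def using ps
    by (simp add: prod.atLeastLessThan_Suc)
  have Ms: "Mseq m s = Mseq m p * Q" unfolding Q_def using ps by (rule Mseq_split)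
  have "(\<Sum>a<m s * Q. psi m (a * Mseq m p) u) = (\<Sum>i<m s. \<Sum>e<Q. psi m ((i*Q+e) * Mseq m p) u)"
    by (rule sum_blocks)
  also have "\<dots> = (\<Sum>i<m s. \<Sum>e<Q. rchar m s u ^ i * psi m (e * Mseq m p) u)"
  proof (intro sum.cong refl)
    fix i e assume i: "i \<in> {..<m s}" and e: "e \<in> {..<Q}"
    have eq: "(i*Q+e) * Mseq m p = i * Mseq m s + e * Mseq m p" unfolding Ms by (simp add: algebra_simps)
    have "e * Mseq m p < Mseq m s" unfolding Ms using e Mseq_pos[where m=m, OF m_pos, of p] by simp
    then show "psi m ((i*Q+e) * Mseq m p) u = rchar m s u ^ i * psi m (e * Mseq m p) u"
      unfolding eq psi_add[OF \<open>e * Mseq m p < Mseq m s\<close>] using psi_single[of i s u] i by simp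
  qed
  also have "\<dots> = (\<Sum>i<m s. rchar m s u ^ i) * (\<Sum>e<Q. psi m (e * Mseq m p) u)"
    by (simp add: sum_distrib_left sum_distrib_right sum.swap[of _ "{..<m s}"])
  also have "\<dots> = 0" using sum_rchar_powers[where m=m and u=u and s=s, OF us] by simp
  finally show ?thesis unfolding L .
qed

lemma periods_sum_vanishes:
  assumes ps: "p \<le> s"
  shows "(\<Sum>a<c * (\<Prod>j\<in>{p..<Suc s}. m j). psi m (a * Mseq m p) u) = 0"
proof -
  define L where "L = (\<Prod>j\<in>{p..<Suc s}. m j)"
  have Ms: "Mseq m (Suc s) = Mseq m p * L" unfolding L_def by (rule Mseq_split) (use ps in simp)
  have "(\<Sum>a<c * L. psi m (a * Mseq m p) u) = (\<Sum>i<c. \<Sum>e<L. psi m ((i*L+e) * Mseq m p) u)"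
    by (rule sum_blocks)
  also have "\<dots> = (\<Sum>i<c. psi m (i * Mseq m (Suc s)) u * (\<Sum>e<L. psi m (e * Mseq m p) u))"
    unfolding sum_distrib_left
  proof (intro sum.cong refl)
    fix i e assume e: "e \<in> {..<L}"
    have eq: "(i*L+e) * Mseq m p = i * Mseq m (Suc s) + e * Mseq m p"
      unfolding Ms by (simp add: algebra_simps)
    have "e * Mseq m p < Mseq m (Suc s)" unfolding Ms using e Mseq_pos[where m=m, OF m_pos, of p] by simp
    then show "psi m ((i*L+e) * Mseq m p) u = psi m (i * Mseq m (Suc s)) u * psi m (e * Mseq m p) u"
      unfolding eq by (rule psi_add)
  qed
  also have "\<dots> = 0" using period_sum_vanishes[OF ps] unfolding L_def by simp
  finally show ?thesis unfolding L_def .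
qed

lemma partial_period_sum_bound:
  assumes ps: "p \<le> s"
  shows "norm (\<Sum>a<Q. psi m (a * Mseq m p) u) \<le> real (\<Prod>j\<in>{p..<Suc s}. m j)"
proof -
  define L where "L = (\<Prod>j\<in>{p..<Suc s}. m j)"
  have "0 < L" unfolding L_def using m_ge2 by (simp add: prod_pos m_pos)
  have "(\<Sum>a<Q. psi m (a * Mseq m p) u) = (\<Sum>a<(Q div L) * L + Q mod L. psi m (a * Mseq m p) u)"
    by simp
  also have "\<dots> = (\<Sum>e<Q mod L. psi m (((Q div L) * L + e) * Mseq m p) u)"
    unfolding sum_split_nat using periods_sum_vanishes[OF ps, of "Q div L"] unfolding L_def by simp
  finally have "norm (\<Sum>a<Q. psi m (a * Mseq m p) u) \<le> real (Q mod L)"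
    using norm_sum_psi_le by simp
  also have "\<dots> \<le> real L" using \<open>0 < L\<close> by simp
  finally show ?thesis unfolding L_def .
qed

lemma dirichlet_Mseq_vanishes:
  assumes sp: "s < p"
  shows "dirichlet m (Mseq m p) u = 0"
proof -
  have "Mseq m p = (\<Prod>j\<in>{Suc s..<p}. m j) * (\<Prod>j\<in>{0..<Suc s}. m j)"
    using Mseq_split[of "Suc s" p m] sp by (simp add: Mseq_def atLeast0LessThan)
  then show ?thesis unfolding dirichlet_def
    using periods_sum_vanishes[of 0 "\<Prod>j\<in>{Suc s..<p}. m j"] by (simp add: Mseq_def)
qed

end


section \<open>Block decomposition of the Fejer sums\<close>

context
  fixes u :: "nat \<Rightarrow> nat" and p :: nat
  assumes D_vanishes: "dirichlet m (Mseq m p) u = 0"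
begin

lemma dirichlet_shift:
  assumes e: "e < Mseq m p"
  shows "dirichlet m (a * Mseq m p + e) u = psi m (a * Mseq m p) u * dirichlet m e u"
proof -
  have "(\<Sum>j<a * Mseq m p. psi m j u) = (\<Sum>i<a. \<Sum>e<Mseq m p. psi m (i * Mseq m p + e) u)"
    by (rule sum_blocks)
  also have "\<dots> = (\<Sum>i<a. psi m (i * Mseq m p) u * dirichlet m (Mseq m p) u)"
    by (intro sum.cong refl) (simp add: dirichlet_def sum_distrib_left psi_add)
  finally have full_blocks: "(\<Sum>j<a * Mseq m p. psi m j u) = 0"
    using D_vanishes by simp
  have "(\<Sum>i<e. psi m (a * Mseq m p + i) u) = psi m (a * Mseq m p) u * dirichlet m e u"
    unfolding dirichlet_def sum_distrib_left
    by (intro sum.cong refl) (use e in \<open>simp add: psi_add\<close>)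
  then show ?thesis unfolding dirichlet_def[of m "a * Mseq m p + e"] sum_split_nat full_blocks
    by simp
qed

lemma fejer_sum_block:
  assumes R: "R < Mseq m p"
  shows "fejer_sum m (a * Mseq m p + R) u
    = (\<Sum>i<a. psi m (i * Mseq m p) u) * fejer_sum m (Mseq m p) u + psi m (a * Mseq m p) u * fejer_sum m R u"
proof -
  have "(\<Sum>j<a * Mseq m p. dirichlet m j u)
      = (\<Sum>i<a. \<Sum>e<Mseq m p. dirichlet m (i * Mseq m p + e) u)"
    by (rule sum_blocks)
  also have "\<dots> = (\<Sum>i<a. psi m (i * Mseq m p) u * fejer_sum m (Mseq m p) u)"
    by (intro sum.cong refl) (simp add: fejer_sum_def sum_distrib_left dirichlet_shift)
  finally have full_blocks: "(\<Sum>j<a * Mseq m p. dirichlet m j u)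
      = (\<Sum>i<a. psi m (i * Mseq m p) u) * fejer_sum m (Mseq m p) u"
    by (simp add: sum_distrib_right)
  have "(\<Sum>i<R. dirichlet m (a * Mseq m p + i) u) = psi m (a * Mseq m p) u * fejer_sum m R u"
    unfolding fejer_sum_def sum_distrib_left
    by (intro sum.cong refl) (use R in \<open>simp add: dirichlet_shift\<close>)
  then show ?thesis
    unfolding fejer_sum_def[of m "a * Mseq m p + R"] sum_split_nat full_blocks by simp
qed

lemma norm_fejer_sum_block:
  "norm (fejer_sum m n u) \<le> norm (\<Sum>i<n div Mseq m p. psi m (i * Mseq m p) u)
      * norm (fejer_sum m (Mseq m p) u) + norm (fejer_sum m (n mod Mseq m p) u)"
proof -
  have "0 < Mseq m p" by (rule Mseq_pos[where m=m, OF m_pos])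
  have "fejer_sum m n u = fejer_sum m (n div Mseq m p * Mseq m p + n mod Mseq m p) u"
    by (simp only: div_mult_mod_eq)
  also have "\<dots> = (\<Sum>i<n div Mseq m p. psi m (i * Mseq m p) u) * fejer_sum m (Mseq m p) u
      + psi m (n div Mseq m p * Mseq m p) u * fejer_sum m (n mod Mseq m p) u"
    using \<open>0 < Mseq m p\<close> by (intro fejer_sum_block) simp
  finally show ?thesis
    by (simp add: norm_triangle_le norm_mult norm_psi)
qed

end


section \<open>The pointwise bound\<close>

context
  fixes B :: nat and k l N :: nat and u :: "nat \<Rightarrow> nat"
  assumes m_le: "\<And>j. m j \<le> B"
    and kl: "k < l" "l \<le> N"
    and uk: "0 < u k" "u k < m k"
    and ul: "l < N \<Longrightarrow> 0 < u l \<and> u l < m l"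
begin

text \<open>With P = M_{k+1}, the outer character sum in the block decomposition of S_R
  (R \<le> M_N) satisfies |W| P \<le> B M_l: for l < N because u_l \<noteq> 0 makes the sum periodic,
  for l = N trivially.\<close>
lemma outer_sum_bound:
  assumes c: "c * Mseq m (Suc k) \<le> Mseq m N"
  shows "norm (\<Sum>i<c. psi m (i * Mseq m (Suc k)) u) * real (Mseq m (Suc k)) \<le> real B * real (Mseq m l)"
proof (cases "l < N")
  case True
  have "norm (\<Sum>i<c. psi m (i * Mseq m (Suc k)) u) \<le> real (\<Prod>j\<in>{Suc k..<Suc l}. m j)"
    using ul[OF True] kl by (intro partial_period_sum_bound) auto
  then have "norm (\<Sum>i<c. psi m (i * Mseq m (Suc k)) u) * real (Mseq m (Suc k))
      \<le> real (\<Prod>j\<in>{Suc k..<Suc l}. m j) * real (Mseq m (Suc k))"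
    by (intro mult_right_mono) auto
  also have "\<dots> = real (Mseq m (Suc l))"
    using Mseq_split[of "Suc k" "Suc l" m] kl by (simp add: mult.commute)
  also have "\<dots> \<le> real B * real (Mseq m l)"
    using m_le[of l] by (simp add: Mseq_Suc mult_right_mono del: of_nat_mult flip: of_nat_mult)
  finally show ?thesis .
next
  case False
  then have "l = N" using kl by simp
  have "norm (\<Sum>i<c. psi m (i * Mseq m (Suc k)) u) * real (Mseq m (Suc k)) \<le> real c * real (Mseq m (Suc k))"
    using norm_sum_psi_le by (intro mult_right_mono) auto
  also have "\<dots> \<le> real (Mseq m l)" using c \<open>l = N\<close> by (simp flip: of_nat_mult)
  also have "\<dots> \<le> real B * real (Mseq m l)"
  proof -
    have "1 \<le> real B" using m_le[of 0] m_ge2[of 0] by simp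
    then show ?thesis using mult_right_mono[of 1 "real B" "real (Mseq m l)"] by simp
  qed
  finally show ?thesis .
qed

lemma fejer_sum_bound:
  assumes R: "R \<le> Mseq m N"
  shows "norm (fejer_sum m R u) \<le> real (B*B + B) * real (Mseq m l) * real (Mseq m k)"
proof -
  define P where "P = Mseq m (Suc k)"
  define W where "W = (\<Sum>i<R div P. psi m (i * P) u)"
  have "0 < P" unfolding P_def by (rule Mseq_pos[where m=m, OF m_pos])
  have "dirichlet m P u = 0" unfolding P_def by (rule dirichlet_Mseq_vanishes[where u=u and s=k, OF uk]) simp
  then have "norm (fejer_sum m R u) \<le> norm W * norm (fejer_sum m P u) + norm (fejer_sum m (R mod P) u)"
    unfolding W_def P_def by (rule norm_fejer_sum_block)
  also have "\<dots> \<le> norm W * (real P * real P) + real P * real P"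
  proof (intro add_mono mult_left_mono norm_fejer_sum_le)
    have "real (R mod P) * real (R mod P) \<le> real P * real P"
      using \<open>0 < P\<close> by (intro mult_mono) auto
    then show "norm (fejer_sum m (R mod P) u) \<le> real P * real P"
      using norm_fejer_sum_le[of m "R mod P" u] by linarith
  qed auto
  finally have split: "norm (fejer_sum m R u) \<le> norm W * real P * real P + real P * real P"
    by (simp add: mult.assoc)
  have "R div P * P \<le> Mseq m N" using R div_mult_mod_eq[of R P] by linarith
  then have WP: "norm W * real P \<le> real B * real (Mseq m l)"
    unfolding W_def P_def by (rule outer_sum_bound)
  have PB: "real P \<le> real B * real (Mseq m k)"
    using m_le[of k] by (simp add: P_def Mseq_Suc mult_right_mono del: of_nat_mult flip: of_nat_mult)
  have Pl: "real P \<le> real (Mseq m l)"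
    unfolding P_def using kl by (simp add: Mseq_mono[where m=m, OF m_pos])
  have "norm W * real P * real P \<le> real B * real (Mseq m l) * (real B * real (Mseq m k))"
    using WP PB by (rule mult_mono) auto
  moreover have "real P * real P \<le> real (Mseq m l) * (real B * real (Mseq m k))"
    using Pl PB by (rule mult_mono) auto
  ultimately show ?thesis using split by (simp add: algebra_simps)
qed

text \<open>|K_n(u)| \<le> 2 (B^2 + B) M_l M_k / M_N for every n \<ge> M_N, by one more block
  decomposition, now with period M_N.\<close>
lemma fejer_bound:
  assumes n: "Mseq m N \<le> n"
  shows "norm (fejer m n u) \<le> 2 * real (B*B + B) * real (Mseq m l) * real (Mseq m k) / real (Mseq m N)"
proof -
  define A where "A = real (B*B + B) * real (Mseq m l) * real (Mseq m k)"
  define P where "P = Mseq m N"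
  define q where "q = n div P"
  have "0 < P" unfolding P_def by (rule Mseq_pos[where m=m, OF m_pos])
  have "1 \<le> q" unfolding q_def using div_le_mono[OF n, of P] \<open>0 < P\<close> P_def by simp
  have "dirichlet m P u = 0" unfolding P_def using kl by (intro dirichlet_Mseq_vanishes[where u=u and s=k, OF uk]) simp
  then have "norm (fejer_sum m n u) \<le> norm (\<Sum>i<q. psi m (i * P) u) * norm (fejer_sum m P u)
      + norm (fejer_sum m (n mod P) u)"
    unfolding q_def P_def by (rule norm_fejer_sum_block)
  also have "\<dots> \<le> real q * A + A"
    unfolding A_def P_def using \<open>0 < P\<close>
    by (intro add_mono mult_mono norm_sum_psi_le fejer_sum_bound) (auto simp: P_def less_imp_le)
  also have "\<dots> \<le> 2 * real q * A"
  proof -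
    have "A \<le> real q * A"
      using \<open>1 \<le> q\<close> mult_right_mono[of 1 "real q" A] by (simp add: A_def)
    then show ?thesis by linarith
  qed
  finally have S: "norm (fejer_sum m n u) \<le> 2 * real q * A" .
  have qP: "real q * real P \<le> real n"
    using div_mult_mod_eq[of n P] unfolding q_def by (simp flip: of_nat_mult)
  have "norm (fejer m n u) = norm (fejer_sum m n u) / real n"
    unfolding fejer_def fejer_sum_def by (simp add: norm_divide)
  also have "\<dots> \<le> 2 * real q * A / real n"
    using S by (simp add: divide_right_mono)
  also have "\<dots> \<le> 2 * A / real P"
  proof -
    have "0 \<le> A" by (simp add: A_def)
    then have "(2 * real q * A) * real P \<le> (2 * A) * real n"
      using mult_left_mono[OF qP, of "2 * A"] by (simp add: ac_simps)
    moreover have "0 < real P" "0 < real n" using \<open>0 < P\<close> n P_def by auto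
    ultimately show ?thesis by (simp add: divide_simps)
  qed
  finally show ?thesis unfolding A_def P_def by (simp only: mult.assoc)
qed

end

end


lemma gsub_low_digits:
  assumes "\<And>k. 0 < m k" and "x \<in> Gm m" "t \<in> IN m N" "j < N"
  shows "gsub m x t j = x j"
  using assms unfolding gsub_def IN_def Gm_def by (auto simp: PiE_iff)

text \<open>The pointwise bound for u = x - t with x \<in> I_N^{k,l} and t \<in> I_N: the digits of u
  at k and (if l < N) at l are those of x, hence nonzero.\<close>
lemma fejer_translate_bound:
  fixes m :: "nat \<Rightarrow> nat"
  assumes m_ge2: "\<And>k. 2 \<le> m k" and m_le: "\<And>k. m k \<le> B"
    and kl: "k < l" "l \<le> N" and x: "x \<in> INkl m N k l" and t: "t \<in> IN m N"
    and n: "Mseq m N \<le> n"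
  shows "cmod (fejer m n (gsub m x t))
    \<le> 2 * real (B*B + B) * real (Mseq m l) * real (Mseq m k) / real (Mseq m N)"
proof (rule fejer_bound[OF m_ge2 m_le kl _ _ _ n])
  have m_pos: "0 < m j" for j using m_ge2[of j] by simp
  have "x \<in> Gm m" using x by (simp add: INkl_def)
  have low: "gsub m x t j = x j" if "j < N" for j
    using gsub_low_digits[where m=m, OF m_pos \<open>x \<in> Gm m\<close> t that] .
  have less: "gsub m x t j < m j" for j
    using m_pos[of j] by (simp add: gsub_def)
  show "0 < gsub m x t k" "gsub m x t k < m k"
    using x kl low[of k] less[of k] by (simp_all add: INkl_def)
  show "0 < gsub m x t l \<and> gsub m x t l < m l" if "l < N"
    using x that low[of l] less[of l] by (simp add: INkl_def)
qed

theorem lemma4: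
  fixes m :: "nat \<Rightarrow> nat"
  assumes "bounded_gen_seq m"
  shows "\<exists>c::real. \<forall>N k l x n. 1 \<le> N \<longrightarrow> k \<le> N - 1 \<longrightarrow> k + 1 \<le> l \<longrightarrow> l \<le> N
    \<longrightarrow> x \<in> INkl m N k l \<longrightarrow> n \<ge> Mseq m N \<longrightarrow>
    (\<integral>t\<in>IN m N. cmod (fejer m n (gsub m x t)) \<partial>haar m)
      \<le> c * real (Mseq m l) * real (Mseq m k) / real (Mseq m N) ^ 2"
proof -
  have m_ge2: "\<And>k. 2 \<le> m k" and "bdd_above (range m)"
    using assms by (auto simp: bounded_gen_seq_def)
  then obtain B where m_le: "\<And>k. m k \<le> B" by (auto simp: bdd_above_def)
  have m_pos: "0 < m k" for k using m_ge2[of k] by simp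
  interpret prob_space "haar m" using m_pos by (rule prob_space_haar)
  show ?thesis
  proof (intro exI allI impI)
    fix N k l x n
    assume "1 \<le> N" "k \<le> N - 1" "k + 1 \<le> l" "l \<le> N" "x \<in> INkl m N k l" "Mseq m N \<le> n"
    then have "(\<integral>t\<in>IN m N. cmod (fejer m n (gsub m x t)) \<partial>haar m) \<le> measure (haar m) (IN m N)
        * (2 * real (B*B + B) * real (Mseq m l) * real (Mseq m k) / real (Mseq m N))"
      using measure_IN(1)[where m=m, OF m_pos] fejer_translate_bound[OF m_ge2 m_le]
      by (intro set_integral_le_const) (auto simp: emeasure_eq_measure)
    then show "(\<integral>t\<in>IN m N. cmod (fejer m n (gsub m x t)) \<partial>haar m)
      \<le> 2 * real (B*B + B) * real (Mseq m l) * real (Mseq m k) / real (Mseq m N) ^ 2"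
      by (simp add: measure_IN(2)[where m=m, OF m_pos] power2_eq_square)
  qed
qed

end
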